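(* Let $\mathcal{G}$ be a hereditary graph family such that $\mathcal{G}_n\neq\emptyset$ for all $n$, let $r\geq 2$ and $0\leq \alpha \leq 1-\frac{1}{r}$. Suppose there is $n_1$ such that $\lambda_{\alpha}(\mathcal{G}_n)> \left(1-\frac{1}{r}\right)n-\left(1-\frac{1}{r}\right)$ for all $n\ge n_1$. Then the limit $$\pi_{\alpha}(\mathcal{G}):=\lim_{n\to \infty} \frac{\lambda_{\alpha}(\mathcal{G}_n)}{n}$$ exists, and $\pi_{\alpha}(\mathcal{G})\leq \frac{\lambda_{\alpha}(\mathcal{G}_n)}{n-1}$ for every $n\ge n_1$.
   Context: $\lambda_\alpha(G)$ is the largest eigenvalue of $A_\alpha(G)=\alpha D(G)+(1-\alpha)A(G)$ ($A$ adjacency matrix, $D$ diagonal degree matrix). A graph family is hereditary if it is closed under taking induced subgraphs. For a family $\mathcal{G}$, $\mathcal{G}_n$ is the set of $n$-vertex graphs in $\mathcal{G}$ and $\lambda_\alpha(\mathcal{G}_n)=\max_{G\in\mathcal{G}_n}\lambda_\alpha(G)$. *)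

theory Defs
  imports Complex_Main "Jordan_Normal_Form.Char_Poly"
begin

text \<open>A finite simple graph on the vertex set {0..<n}: a pair (n, E) where E is a
  symmetric irreflexive edge relation on {0..<n}.\<close>
type_synonym graph = "nat \<times> (nat \<times> nat) set"

definition is_graph :: "graph \<Rightarrow> bool" where
  "is_graph G = (snd G \<subseteq> {..<fst G} \<times> {..<fst G} \<and> sym (snd G) \<and> (\<forall>i. (i, i) \<notin> snd G))"

definition induced_sub :: "graph \<Rightarrow> nat \<Rightarrow> (nat \<Rightarrow> nat) \<Rightarrow> graph" where
  "induced_sub G k f = (k, {(i, j). i < k \<and> j < k \<and> (f i, f j) \<in> snd G})"

definition hereditary :: "graph set \<Rightarrow> bool" where
  "hereditary F = (\<forall>G\<in>F. \<forall>k f. inj_on f {..<k} \<and> f ` {..<k} \<subseteq> {..<fst G}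
                       \<longrightarrow> induced_sub G k f \<in> F)"

definition slice :: "graph set \<Rightarrow> nat \<Rightarrow> graph set" where
  "slice F n = {G \<in> F. fst G = n}"

definition degree :: "graph \<Rightarrow> nat \<Rightarrow> nat" where
  "degree G i = card {j. (i, j) \<in> snd G}"

definition A_alpha :: "real \<Rightarrow> graph \<Rightarrow> real mat" where
  "A_alpha \<alpha> G = mat (fst G) (fst G)
     (\<lambda>(i, j). \<alpha> * (if i = j then real (degree G i) else 0)
              + (1 - \<alpha>) * (if (i, j) \<in> snd G then 1 else 0))"

definition lambda_alpha :: "real \<Rightarrow> graph \<Rightarrow> real" where
  "lambda_alpha \<alpha> G = Max {k. eigenvalue (A_alpha \<alpha> G) k}"

definition lambda_fam :: "real \<Rightarrow> graph set \<Rightarrow> nat \<Rightarrow> real" where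
  "lambda_fam \<alpha> F n = Max (lambda_alpha \<alpha> ` slice F n)"

end

theory Submission
  imports Defs "HOL-Analysis.Function_Topology"
begin

text \<open>Since A_alpha(G) is symmetric, lambda_alpha(G) is the maximum of the quadratic form
  x' A_alpha(G) x = sum over ordered edges (a, c) of alpha x_a^2 + (1 - alpha) x_a x_c on unit
  vectors. Take an extremal graph G on n + 1 vertices and a unit eigenvector x. Deleting a
  vertex v gives a graph of the family on n vertices whose form at x restricted to the other
  vertices is at most lambda(n) (1 - x_v^2); summing over v, every edge is counted n - 1 times,
  so (n - 1) lambda(n + 1) <= n lambda(n). Thus lambda(n) / (n - 1) decreases; it is
  nonnegative by the growth hypothesis, so it converges, and lambda(n) / n has the same limit.\<close>

section \<open>Quadratic forms and the Rayleigh quotient\<close>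

definition quad_form :: "nat \<Rightarrow> (nat \<Rightarrow> nat \<Rightarrow> real) \<Rightarrow> (nat \<Rightarrow> real) \<Rightarrow> real" where
  "quad_form n a x = (\<Sum>i<n. \<Sum>j<n. a i j * x i * x j)"

definition sum_squares :: "nat \<Rightarrow> (nat \<Rightarrow> real) \<Rightarrow> real" where
  "sum_squares n x = (\<Sum>i<n. (x i)\<^sup>2)"

lemma sum_squares_nonneg: "0 \<le> sum_squares n x"
  unfolding sum_squares_def by (intro sum_nonneg) auto

lemma sum_squares_eq_0_iff: "sum_squares n x = 0 \<longleftrightarrow> (\<forall>i<n. x i = 0)"
  unfolding sum_squares_def by (subst sum_nonneg_eq_0_iff) auto

lemma quad_form_cong: "(\<And>i. i < n \<Longrightarrow> x i = y i) \<Longrightarrow> quad_form n a x = quad_form n a y"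
  unfolding quad_form_def by (intro sum.cong) auto

lemma sum_squares_cong: "(\<And>i. i < n \<Longrightarrow> x i = y i) \<Longrightarrow> sum_squares n x = sum_squares n y"
  unfolding sum_squares_def by (intro sum.cong) auto

lemma quad_form_scale: "quad_form n a (\<lambda>i. c * x i) = c\<^sup>2 * quad_form n a x"
  unfolding quad_form_def power2_eq_square by (simp add: sum_distrib_left algebra_simps)

lemma sum_squares_scale: "sum_squares n (\<lambda>i. c * x i) = c\<^sup>2 * sum_squares n x"
  unfolding sum_squares_def by (simp add: sum_distrib_left power_mult_distrib)

lemma sum_mult_indicator:
  fixes f :: "nat \<Rightarrow> real"
  assumes "k < n"
  shows "(\<Sum>i<n. f i * (if i = k then 1 else 0)) = f k"
proof -
  have "(\<Sum>i<n. f i * (if i = k then 1 else 0)) = (\<Sum>i<n. if i = k then f i else 0)"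
    by (intro sum.cong) auto
  then show ?thesis
    using assms by simp
qed

lemma quad_form_basis:
  assumes "k < n"
  shows "quad_form n a (\<lambda>i. if i = k then 1 else 0) = a k k"
  unfolding quad_form_def sum_mult_indicator[OF assms] by simp

lemma sum_squares_basis:
  assumes "k < n"
  shows "sum_squares n (\<lambda>i. if i = k then 1 else 0) = 1"
  unfolding sum_squares_def power2_eq_square sum_mult_indicator[OF assms] by simp

lemma quad_form_add_scaled:
  assumes "\<And>i j. a i j = a j i"
  shows "quad_form n a (\<lambda>i. x i + t * z i)
           = quad_form n a x + 2 * t * (\<Sum>i<n. \<Sum>j<n. a i j * x i * z j) + t\<^sup>2 * quad_form n a z"
proof -
  have swap: "(\<Sum>i<n. \<Sum>j<n. a i j * z i * x j) = (\<Sum>i<n. \<Sum>j<n. a i j * x i * z j)"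
    by (subst sum.swap) (simp add: assms mult_ac)
  have "quad_form n a (\<lambda>i. x i + t * z i)
      = quad_form n a x + t * (\<Sum>i<n. \<Sum>j<n. a i j * x i * z j)
          + t * (\<Sum>i<n. \<Sum>j<n. a i j * z i * x j) + t\<^sup>2 * quad_form n a z"
    unfolding quad_form_def
    by (simp add: sum.distrib sum_distrib_left algebra_simps power2_eq_square)
  then show ?thesis
    using swap by simp
qed

lemma sum_squares_add_scaled:
  "sum_squares n (\<lambda>i. x i + t * z i)
     = sum_squares n x + 2 * t * (\<Sum>i<n. x i * z i) + t\<^sup>2 * sum_squares n z"
  unfolding sum_squares_def
  by (simp add: sum.distrib sum_distrib_left algebra_simps power2_eq_square)

lemma continuous_on_quad_form: "continuous_on A (quad_form n a)"
  unfolding quad_form_def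
  by (intro continuous_intros continuous_on_subset[OF continuous_on_product_coordinates]) auto

lemma continuous_on_sum_squares: "continuous_on A (sum_squares n)"
  unfolding sum_squares_def
  by (intro continuous_intros continuous_on_subset[OF continuous_on_product_coordinates]) auto

lemma compact_cube: "compact (\<Pi>\<^sub>E i\<in>UNIV. if i < n then {-1..1::real} else {0})"
proof -
  have "compactin (product_topology (\<lambda>i. euclidean) UNIV)
          (\<Pi>\<^sub>E i\<in>UNIV. if i < n then {-1..1::real} else {0})"
    by (subst compactin_PiE) auto
  then show ?thesis
    by (simp add: euclidean_product_topology)
qed

lemma linear_coeff_eq_0_if_quadratic_nonpos:
  fixes c d :: real
  assumes "\<And>t. 2 * t * c + t\<^sup>2 * d \<le> 0"
  shows "c = 0"
proof (rule ccontr)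
  assume "c \<noteq> 0"
  define D where "D = \<bar>d\<bar> + 1"
  define t where "t = c / D"
  have "D > 0"
    unfolding D_def by linarith
  have "t * c = c\<^sup>2 / D"
    unfolding t_def power2_eq_square by simp
  then have "t * c > 0"
    using \<open>c \<noteq> 0\<close> \<open>D > 0\<close> by simp
  have "t\<^sup>2 * \<bar>d\<bar> = t * c * (\<bar>d\<bar> / D)"
    unfolding t_def power2_eq_square by simp
  also have "\<dots> < t * c"
  proof -
    have "\<bar>d\<bar> / D < 1"
      using \<open>D > 0\<close> unfolding D_def by simp
    then show ?thesis
      using mult_strict_left_mono[OF _ \<open>t * c > 0\<close>] by fastforce
  qed
  finally have "t\<^sup>2 * \<bar>d\<bar> < t * c" .
  moreover have "- (t\<^sup>2 * \<bar>d\<bar>) \<le> t\<^sup>2 * d"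
    using mult_left_mono[of "- \<bar>d\<bar>" d "t\<^sup>2"] by simp
  ultimately have "2 * t * c + t\<^sup>2 * d > 0"
    using \<open>t * c > 0\<close> by linarith
  with assms[of t] show False
    by linarith
qed

lemma quad_form_max_exists:
  assumes "n \<ge> 1"
  shows "\<exists>x. sum_squares n x = 1 \<and> (\<forall>y. quad_form n a y \<le> quad_form n a x * sum_squares n y)"
proof -
  define K where "K = (\<Pi>\<^sub>E i\<in>UNIV. if i < n then {-1..1::real} else {0}) \<inter> {y. sum_squares n y = 1}"
  have "compact K"
    unfolding K_def
    by (intro compact_Int_closed compact_cube closed_Collect_eq continuous_on_sum_squares
          continuous_on_const)
  have "(\<lambda>i. if i = 0 then 1 else 0) \<in> K"
    using assms sum_squares_basis[of 0 n] unfolding K_def by auto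
  then obtain x where "x \<in> K" and x_max: "\<And>y. y \<in> K \<Longrightarrow> quad_form n a y \<le> quad_form n a x"
    using continuous_attains_sup[OF \<open>compact K\<close> _ continuous_on_quad_form] by blast
  have "quad_form n a y \<le> quad_form n a x * sum_squares n y" for y
  proof (cases "sum_squares n y = 0")
    case True
    then have "quad_form n a y = quad_form n a (\<lambda>i. 0 * y i)"
      by (intro quad_form_cong) (simp add: sum_squares_eq_0_iff)
    also have "\<dots> = 0"
      unfolding quad_form_scale by simp
    finally show ?thesis
      using True by simp
  next
    case False
    define s where "s = sum_squares n y"
    have "s > 0"
      using False sum_squares_nonneg[of n y] unfolding s_def by linarith
    define y' where "y' i = (if i < n then y i / sqrt s else 0)" for i
    have "sum_squares n y' = sum_squares n (\<lambda>i. (1 / sqrt s) * y i)"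
      by (rule sum_squares_cong) (simp add: y'_def)
    also have "\<dots> = 1"
      using \<open>s > 0\<close> unfolding sum_squares_scale s_def by (simp add: power_divide)
    finally have "sum_squares n y' = 1" .
    have y'_bound: "\<bar>y' i\<bar> \<le> 1" if "i < n" for i
    proof -
      have "(y' i)\<^sup>2 \<le> sum_squares n y'"
        unfolding sum_squares_def using that by (intro member_le_sum) auto
      then show ?thesis
        using \<open>sum_squares n y' = 1\<close> abs_le_square_iff[of "y' i" 1] by simp
    qed
    have "y' i \<in> (if i < n then {-1..1} else {0})" for i
    proof (cases "i < n")
      case True
      then show ?thesis
        using y'_bound[OF True] by (simp add: abs_le_iff)
    qed (simp add: y'_def)
    with \<open>sum_squares n y' = 1\<close> have "y' \<in> K"
      unfolding K_def by auto
    have "quad_form n a y' = quad_form n a (\<lambda>i. (1 / sqrt s) * y i)"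
      by (rule quad_form_cong) (simp add: y'_def)
    also have "\<dots> = quad_form n a y / s"
      using \<open>s > 0\<close> unfolding quad_form_scale by (simp add: power_divide)
    finally show ?thesis
      using x_max[OF \<open>y' \<in> K\<close>] \<open>s > 0\<close> unfolding s_def by (simp add: divide_le_eq mult.commute)
  qed
  moreover have "sum_squares n x = 1"
    using \<open>x \<in> K\<close> unfolding K_def by auto
  ultimately show ?thesis
    by blast
qed

text \<open>First variation: along x + t e_k the Rayleigh bound becomes a quadratic in t that is
  nowhere positive, so its linear coefficient, the k-th coordinate of a x - Q(x) x, vanishes.\<close>
lemma quad_form_max_eigen:
  assumes sym: "\<And>i j. a i j = a j i"
    and unit: "sum_squares n x = 1"
    and max: "\<And>y. quad_form n a y \<le> quad_form n a x * sum_squares n y"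
    and "k < n"
  shows "(\<Sum>i<n. a k i * x i) = quad_form n a x * x k"
proof -
  define \<mu> where "\<mu> = quad_form n a x"
  define z :: "nat \<Rightarrow> real" where "z i = (if i = k then 1 else 0)" for i
  have cross: "(\<Sum>i<n. \<Sum>j<n. a i j * x i * z j) = (\<Sum>i<n. a k i * x i)"
    unfolding z_def mult.assoc[symmetric] sum_mult_indicator[OF \<open>k < n\<close>] by (simp add: sym)
  have inner: "(\<Sum>i<n. x i * z i) = x k"
    unfolding z_def sum_mult_indicator[OF \<open>k < n\<close>] ..
  have "quad_form n a z = a k k" and "sum_squares n z = 1"
    unfolding z_def using quad_form_basis sum_squares_basis \<open>k < n\<close> by auto
  have "2 * t * ((\<Sum>i<n. a k i * x i) - \<mu> * x k) + t\<^sup>2 * (a k k - \<mu>) \<le> 0" for t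
    using max[of "\<lambda>i. x i + t * z i"] \<open>quad_form n a z = a k k\<close> \<open>sum_squares n z = 1\<close>
    unfolding quad_form_add_scaled[OF sym] sum_squares_add_scaled cross inner unit \<mu>_def[symmetric]
    by (simp add: algebra_simps)
  then show ?thesis
    using linear_coeff_eq_0_if_quadratic_nonpos unfolding \<mu>_def by fastforce
qed

section \<open>The largest eigenvalue of A_alpha\<close>

definition A_alpha_entry :: "real \<Rightarrow> graph \<Rightarrow> nat \<Rightarrow> nat \<Rightarrow> real" where
  "A_alpha_entry \<alpha> G i j = \<alpha> * (if i = j then real (degree G i) else 0)
                           + (1 - \<alpha>) * (if (i, j) \<in> snd G then 1 else 0)"

lemma A_alpha_entry_sym: "is_graph G \<Longrightarrow> A_alpha_entry \<alpha> G i j = A_alpha_entry \<alpha> G j i"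
  unfolding A_alpha_entry_def is_graph_def by (auto dest: symD)

lemma dim_row_A_alpha [simp]: "dim_row (A_alpha \<alpha> G) = fst G"
  and dim_col_A_alpha [simp]: "dim_col (A_alpha \<alpha> G) = fst G"
  unfolding A_alpha_def by simp_all

lemma A_alpha_carrier: "A_alpha \<alpha> G \<in> carrier_mat (fst G) (fst G)"
  by (simp add: carrier_matI)

lemma A_alpha_mult_vec_index:
  assumes "v \<in> carrier_vec (fst G)" and "k < fst G"
  shows "(A_alpha \<alpha> G *\<^sub>v v) $ k = (\<Sum>j<fst G. A_alpha_entry \<alpha> G k j * v $ j)"
  using assms unfolding A_alpha_def A_alpha_entry_def
  by (auto simp: scalar_prod_def atLeast0LessThan intro: sum.cong)

lemma finite_eigenvalues:
  fixes A :: "'a :: field mat"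
  assumes "A \<in> carrier_mat n n"
  shows "finite {k. eigenvalue A k}"
proof -
  have "char_poly A \<noteq> 0"
    using degree_monic_char_poly[OF assms] by auto
  then show ?thesis
    using poly_roots_finite eigenvalue_root_char_poly[OF assms] by simp
qed

lemma eigenvalue_A_alpha_if_eigenfunction:
  assumes "sum_squares (fst G) x \<noteq> 0"
    and "\<And>k. k < fst G \<Longrightarrow> (\<Sum>j<fst G. A_alpha_entry \<alpha> G k j * x j) = \<mu> * x k"
  shows "eigenvalue (A_alpha \<alpha> G) \<mu>"
proof -
  define v where "v = vec (fst G) x"
  have "A_alpha \<alpha> G *\<^sub>v v = \<mu> \<cdot>\<^sub>v v"
    using assms(2) A_alpha_mult_vec_index[of v G] by (intro eq_vecI) (auto simp: v_def)
  moreover have "v \<noteq> 0\<^sub>v (fst G)"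
    using assms(1) unfolding sum_squares_eq_0_iff v_def by (metis index_vec index_zero_vec(1))
  ultimately show ?thesis
    unfolding eigenvalue_def eigenvector_def using A_alpha_carrier[of \<alpha> G]
    by (intro exI[of _ v]) (simp add: v_def)
qed

lemma eigenvalue_A_alpha_le:
  assumes "eigenvalue (A_alpha \<alpha> G) k"
    and bound: "\<And>y. quad_form (fst G) (A_alpha_entry \<alpha> G) y \<le> \<mu> * sum_squares (fst G) y"
  shows "k \<le> \<mu>"
proof -
  obtain w where w: "w \<in> carrier_vec (fst G)" "w \<noteq> 0\<^sub>v (fst G)" "A_alpha \<alpha> G *\<^sub>v w = k \<cdot>\<^sub>v w"
    using assms(1) unfolding eigenvalue_def eigenvector_def by auto
  define y where "y i = w $ i" for i
  have row: "(\<Sum>j<fst G. A_alpha_entry \<alpha> G i j * y j) = k * y i" if "i < fst G" for i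
  proof -
    have "(\<Sum>j<fst G. A_alpha_entry \<alpha> G i j * y j) = (A_alpha \<alpha> G *\<^sub>v w) $ i"
      using A_alpha_mult_vec_index[OF w(1) that] by (simp add: y_def)
    also have "\<dots> = k * y i"
      using w(1,3) that by (simp add: y_def)
    finally show ?thesis .
  qed
  have "quad_form (fst G) (A_alpha_entry \<alpha> G) y = (\<Sum>i<fst G. y i * (\<Sum>j<fst G. A_alpha_entry \<alpha> G i j * y j))"
    unfolding quad_form_def by (simp add: sum_distrib_left mult_ac)
  also have "\<dots> = (\<Sum>i<fst G. y i * (k * y i))"
    using row by (intro sum.cong) auto
  also have "\<dots> = k * sum_squares (fst G) y"
    unfolding sum_squares_def by (simp add: sum_distrib_left power2_eq_square mult_ac)
  finally have "k * sum_squares (fst G) y \<le> \<mu> * sum_squares (fst G) y"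
    using bound by metis
  moreover have "sum_squares (fst G) y > 0"
    using w(1,2) sum_squares_nonneg[of "fst G" y] sum_squares_eq_0_iff[of "fst G" y]
    unfolding y_def by (metis eq_vecI index_zero_vec carrier_vecD order_le_less)
  ultimately show ?thesis
    by simp
qed

lemma lambda_alpha_rayleigh:
  assumes "is_graph G" and "fst G \<ge> 1"
  obtains x where "sum_squares (fst G) x = 1"
    and "quad_form (fst G) (A_alpha_entry \<alpha> G) x = lambda_alpha \<alpha> G"
    and "\<And>y. quad_form (fst G) (A_alpha_entry \<alpha> G) y \<le> lambda_alpha \<alpha> G * sum_squares (fst G) y"
proof -
  let ?Q = "quad_form (fst G) (A_alpha_entry \<alpha> G)"
  obtain x where unit: "sum_squares (fst G) x = 1" and max: "\<And>y. ?Q y \<le> ?Q x * sum_squares (fst G) y"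
    using quad_form_max_exists[OF assms(2)] by blast
  have "eigenvalue (A_alpha \<alpha> G) (?Q x)"
  proof (rule eigenvalue_A_alpha_if_eigenfunction)
    show "sum_squares (fst G) x \<noteq> 0"
      using unit by simp
    show "(\<Sum>j<fst G. A_alpha_entry \<alpha> G k j * x j) = ?Q x * x k" if "k < fst G" for k
      using quad_form_max_eigen[OF A_alpha_entry_sym[OF assms(1)] unit max that] .
  qed
  moreover have "k \<le> ?Q x" if "eigenvalue (A_alpha \<alpha> G) k" for k
    using eigenvalue_A_alpha_le[OF that max] .
  ultimately have "lambda_alpha \<alpha> G = ?Q x"
    unfolding lambda_alpha_def
    by (intro Max_eqI finite_eigenvalues[OF A_alpha_carrier]) auto
  then show ?thesis
    using that unit max by auto
qed

definition edge_term :: "real \<Rightarrow> graph \<Rightarrow> (nat \<Rightarrow> real) \<Rightarrow> nat \<Rightarrow> nat \<Rightarrow> real" where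
  "edge_term \<alpha> G x a c = (if (a, c) \<in> snd G then \<alpha> * (x a)\<^sup>2 + (1 - \<alpha>) * x a * x c else 0)"

lemma degree_eq_sum:
  assumes "is_graph G"
  shows "real (degree G i) = (\<Sum>j<fst G. if (i, j) \<in> snd G then 1 else 0)"
proof -
  have "{j. (i, j) \<in> snd G} = {j \<in> {..<fst G}. (i, j) \<in> snd G}"
    using assms unfolding is_graph_def by auto
  then show ?thesis
    unfolding degree_def by (simp add: sum.inter_filter[symmetric])
qed

lemma quad_form_A_alpha_edges:
  assumes "is_graph G"
  shows "quad_form (fst G) (A_alpha_entry \<alpha> G) x = (\<Sum>a<fst G. \<Sum>c<fst G. edge_term \<alpha> G x a c)"
proof -
  let ?n = "fst G"
  have row: "(\<Sum>c<?n. A_alpha_entry \<alpha> G a c * x a * x c) = (\<Sum>c<?n. edge_term \<alpha> G x a c)"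
    if "a < ?n" for a
  proof -
    let ?E = "\<lambda>c. if (a, c) \<in> snd G then 1 else 0"
    have diag: "(\<Sum>c<?n. \<alpha> * (if a = c then real (degree G a) else 0) * x a * x c)
                = \<alpha> * real (degree G a) * (x a)\<^sup>2"
    proof -
      have "(\<Sum>c<?n. \<alpha> * (if a = c then real (degree G a) else 0) * x a * x c)
            = (\<Sum>c<?n. if c = a then \<alpha> * real (degree G a) * (x a)\<^sup>2 else 0)"
        by (intro sum.cong) (auto simp: power2_eq_square)
      then show ?thesis
        using that by simp
    qed
    have deg: "\<alpha> * real (degree G a) * (x a)\<^sup>2 = (\<Sum>c<?n. \<alpha> * ?E c * (x a)\<^sup>2)"
      unfolding degree_eq_sum[OF assms] sum_distrib_left sum_distrib_right ..
    have "(\<Sum>c<?n. A_alpha_entry \<alpha> G a c * x a * x c)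
          = (\<Sum>c<?n. \<alpha> * (if a = c then real (degree G a) else 0) * x a * x c)
            + (\<Sum>c<?n. (1 - \<alpha>) * ?E c * x a * x c)"
      unfolding A_alpha_entry_def by (simp add: distrib_right sum.distrib)
    also have "\<dots> = (\<Sum>c<?n. \<alpha> * ?E c * (x a)\<^sup>2 + (1 - \<alpha>) * ?E c * x a * x c)"
      unfolding diag deg sum.distrib ..
    also have "\<dots> = (\<Sum>c<?n. edge_term \<alpha> G x a c)"
      unfolding edge_term_def by (intro sum.cong) auto
    finally show ?thesis .
  qed
  show ?thesis
    unfolding quad_form_def using row by (rule sum.cong[OF refl]) simp
qed

section \<open>Deleting a vertex\<close>

definition skip :: "nat \<Rightarrow> nat \<Rightarrow> nat" where
  "skip v i = (if i < v then i else Suc i)"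

lemma inj_on_skip: "inj_on (skip v) A"
  unfolding skip_def inj_on_def by auto

lemma skip_image:
  assumes "v < n"
  shows "skip v ` {..<n - 1} = {..<n} - {v}"
proof
  show "skip v ` {..<n - 1} \<subseteq> {..<n} - {v}"
    using assms unfolding skip_def by auto
  show "{..<n} - {v} \<subseteq> skip v ` {..<n - 1}"
  proof
    fix a
    assume a: "a \<in> {..<n} - {v}"
    show "a \<in> skip v ` {..<n - 1}"
    proof (cases "a < v")
      case True
      then show ?thesis
        using assms by (intro image_eqI[of _ _ a]) (auto simp: skip_def)
    next
      case False
      then obtain b where "a = Suc b" and "v \<le> b"
        using a by (cases a) auto
      then show ?thesis
        using a by (intro image_eqI[of _ _ b]) (auto simp: skip_def)
    qed
  qed
qed

lemma sum_skip:
  assumes "v < n"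
  shows "(\<Sum>i<n - 1. g (skip v i)) = (\<Sum>a\<in>{..<n} - {v}. g a)"
  using sum.reindex[OF inj_on_skip, of g v "{..<n - 1}"] skip_image[OF assms] by simp

lemma sum_squares_skip:
  assumes "v < n"
  shows "sum_squares (n - 1) (x \<circ> skip v) = sum_squares n x - (x v)\<^sup>2"
  unfolding sum_squares_def using sum_skip[OF assms, of "\<lambda>a. (x a)\<^sup>2"] assms
  by (simp add: sum_diff1)

definition delete_vertex :: "graph \<Rightarrow> nat \<Rightarrow> graph" where
  "delete_vertex G v = induced_sub G (fst G - 1) (skip v)"

lemma fst_delete_vertex [simp]: "fst (delete_vertex G v) = fst G - 1"
  unfolding delete_vertex_def induced_sub_def by simp

lemma edge_delete_vertex:
  "(i, j) \<in> snd (delete_vertex G v)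
     \<longleftrightarrow> i < fst G - 1 \<and> j < fst G - 1 \<and> (skip v i, skip v j) \<in> snd G"
  unfolding delete_vertex_def induced_sub_def by simp

lemma is_graph_delete_vertex:
  assumes "is_graph G"
  shows "is_graph (delete_vertex G v)"
  using assms unfolding is_graph_def sym_def by (auto simp: edge_delete_vertex)

lemma delete_vertex_in_hereditary:
  assumes "hereditary F" and "G \<in> F" and "v < fst G"
  shows "delete_vertex G v \<in> F"
  using assms skip_image[OF assms(3)] inj_on_skip
  unfolding hereditary_def delete_vertex_def by blast

lemma quad_form_delete_vertex:
  assumes "is_graph G" and "v < fst G"
  shows "quad_form (fst G - 1) (A_alpha_entry \<alpha> (delete_vertex G v)) (x \<circ> skip v)
           = (\<Sum>a\<in>{..<fst G} - {v}. \<Sum>c\<in>{..<fst G} - {v}. edge_term \<alpha> G x a c)"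
proof -
  have "quad_form (fst G - 1) (A_alpha_entry \<alpha> (delete_vertex G v)) (x \<circ> skip v)
        = (\<Sum>i<fst G - 1. \<Sum>j<fst G - 1. edge_term \<alpha> (delete_vertex G v) (x \<circ> skip v) i j)"
    using quad_form_A_alpha_edges[OF is_graph_delete_vertex[OF assms(1)]] by simp
  also have "\<dots> = (\<Sum>i<fst G - 1. \<Sum>j<fst G - 1. edge_term \<alpha> G x (skip v i) (skip v j))"
    by (intro sum.cong) (auto simp: edge_term_def edge_delete_vertex)
  also have "\<dots> = (\<Sum>i<fst G - 1. \<Sum>c\<in>{..<fst G} - {v}. edge_term \<alpha> G x (skip v i) c)"
    using sum_skip[OF assms(2)] by (rule sum.cong[OF refl])
  also have "\<dots> = (\<Sum>a\<in>{..<fst G} - {v}. \<Sum>c\<in>{..<fst G} - {v}. edge_term \<alpha> G x a c)"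
    using sum_skip[OF assms(2)] .
  finally show ?thesis .
qed

text \<open>Every off-diagonal pair (a, c) survives the removal of exactly card A - 2 of the
  elements v.\<close>
lemma sum_remove_each_double_sum:
  fixes f :: "'a \<Rightarrow> 'a \<Rightarrow> real"
  assumes "finite A" and "\<And>a. a \<in> A \<Longrightarrow> f a a = 0"
  shows "(\<Sum>v\<in>A. \<Sum>a\<in>A - {v}. \<Sum>c\<in>A - {v}. f a c) = (real (card A) - 2) * (\<Sum>a\<in>A. \<Sum>c\<in>A. f a c)"
proof -
  let ?S = "\<Sum>a\<in>A. \<Sum>c\<in>A. f a c"
  have "(\<Sum>a\<in>A - {v}. \<Sum>c\<in>A - {v}. f a c) = ?S - (\<Sum>c\<in>A. f v c) - (\<Sum>a\<in>A. f a v)"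
    if "v \<in> A" for v
    using assms that by (simp add: sum_diff1 sum_subtractf)
  then have "(\<Sum>v\<in>A. \<Sum>a\<in>A - {v}. \<Sum>c\<in>A - {v}. f a c)
             = (\<Sum>v\<in>A. ?S - (\<Sum>c\<in>A. f v c) - (\<Sum>a\<in>A. f a v))"
    by (rule sum.cong[OF refl])
  also have "\<dots> = real (card A) * ?S - ?S - (\<Sum>v\<in>A. \<Sum>a\<in>A. f a v)"
    by (simp add: sum_subtractf)
  also have "(\<Sum>v\<in>A. \<Sum>a\<in>A. f a v) = ?S"
    by (rule sum.swap)
  finally show ?thesis
    by (simp add: algebra_simps)
qed

lemma sum_quad_form_delete_vertex:
  assumes "is_graph G"
  shows "(\<Sum>v<fst G. quad_form (fst G - 1) (A_alpha_entry \<alpha> (delete_vertex G v)) (x \<circ> skip v))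
           = (real (fst G) - 2) * quad_form (fst G) (A_alpha_entry \<alpha> G) x"
proof -
  have "edge_term \<alpha> G x a a = 0" for a
    using assms unfolding is_graph_def edge_term_def by simp
  then show ?thesis
    unfolding quad_form_A_alpha_edges[OF assms]
    using quad_form_delete_vertex[OF assms] sum_remove_each_double_sum[of "{..<fst G}"]
    by simp
qed

section \<open>Graph families\<close>

lemma finite_slice:
  assumes "\<forall>G\<in>F. is_graph G"
  shows "finite (slice F n)"
proof (rule finite_subset)
  show "slice F n \<subseteq> Pair n ` Pow ({..<n} \<times> {..<n})"
    using assms unfolding slice_def is_graph_def by force
qed simp

lemma lambda_fam_ge:
  assumes "\<forall>G\<in>F. is_graph G" and "G \<in> slice F n"
  shows "lambda_alpha \<alpha> G \<le> lambda_fam \<alpha> F n"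
  unfolding lambda_fam_def using assms finite_slice[OF assms(1)] by (intro Max_ge) auto

lemma lambda_fam_attained:
  assumes "\<forall>G\<in>F. is_graph G" and "slice F n \<noteq> {}"
  obtains G where "G \<in> slice F n" and "lambda_alpha \<alpha> G = lambda_fam \<alpha> F n"
proof -
  have "lambda_fam \<alpha> F n \<in> lambda_alpha \<alpha> ` slice F n"
    unfolding lambda_fam_def using assms finite_slice[OF assms(1)] by (intro Max_in) auto
  then show ?thesis
    using that by auto
qed

lemma quad_form_le_lambda_fam:
  assumes "\<forall>G\<in>F. is_graph G" and "G \<in> slice F n" and "n \<ge> 1"
  shows "quad_form n (A_alpha_entry \<alpha> G) y \<le> lambda_fam \<alpha> F n * sum_squares n y"
proof -
  have "is_graph G" and "fst G = n"
    using assms(1,2) unfolding slice_def by auto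
  then have "quad_form n (A_alpha_entry \<alpha> G) y \<le> lambda_alpha \<alpha> G * sum_squares n y"
    using \<open>n \<ge> 1\<close> by (auto elim: lambda_alpha_rayleigh[of G \<alpha>])
  also have "lambda_alpha \<alpha> G * sum_squares n y \<le> lambda_fam \<alpha> F n * sum_squares n y"
    using lambda_fam_ge[OF assms(1,2)] sum_squares_nonneg by (rule mult_right_mono)
  finally show ?thesis .
qed

lemma lambda_alpha_single_vertex:
  assumes "is_graph G" and "fst G = 1"
  shows "lambda_alpha \<alpha> G = 0"
proof -
  obtain x where "quad_form (fst G) (A_alpha_entry \<alpha> G) x = lambda_alpha \<alpha> G"
    using lambda_alpha_rayleigh[OF assms(1), of \<alpha>] assms(2) by auto
  moreover have "quad_form (fst G) (A_alpha_entry \<alpha> G) x = edge_term \<alpha> G x 0 0"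
    using quad_form_A_alpha_edges[OF assms(1)] assms(2) by simp
  moreover have "edge_term \<alpha> G x 0 0 = 0"
    using assms(1) unfolding is_graph_def edge_term_def by simp
  ultimately show ?thesis
    by simp
qed

lemma lambda_fam_one:
  assumes "\<forall>G\<in>F. is_graph G" and "slice F 1 \<noteq> {}"
  shows "lambda_fam \<alpha> F 1 = 0"
proof -
  obtain G where "G \<in> slice F 1" and "lambda_alpha \<alpha> G = lambda_fam \<alpha> F 1"
    using lambda_fam_attained[OF assms] .
  then show ?thesis
    using lambda_alpha_single_vertex assms(1) unfolding slice_def by auto
qed

lemma lambda_fam_Suc_le:
  assumes graphs: "\<forall>G\<in>F. is_graph G" and "hereditary F" and "slice F (Suc n) \<noteq> {}"
    and "n \<ge> 1"
  shows "(real n - 1) * lambda_fam \<alpha> F (Suc n) \<le> real n * lambda_fam \<alpha> F n"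
proof -
  obtain G where G: "G \<in> slice F (Suc n)" and "lambda_alpha \<alpha> G = lambda_fam \<alpha> F (Suc n)"
    using lambda_fam_attained[OF graphs assms(3)] .
  have "is_graph G" and [simp]: "fst G = Suc n"
    using G graphs unfolding slice_def by auto
  then obtain x where unit: "sum_squares (Suc n) x = 1"
    and "quad_form (Suc n) (A_alpha_entry \<alpha> G) x = lambda_fam \<alpha> F (Suc n)"
    using lambda_alpha_rayleigh[OF \<open>is_graph G\<close>, of \<alpha>] \<open>lambda_alpha \<alpha> G = _\<close> by auto
  have deleted: "delete_vertex G v \<in> slice F n" if "v < Suc n" for v
    using delete_vertex_in_hereditary[OF assms(2)] G that unfolding slice_def by auto
  have "(real n - 1) * lambda_fam \<alpha> F (Suc n)
        = (\<Sum>v<Suc n. quad_form n (A_alpha_entry \<alpha> (delete_vertex G v)) (x \<circ> skip v))"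
    using sum_quad_form_delete_vertex[OF \<open>is_graph G\<close>, of \<alpha> x]
      \<open>quad_form (Suc n) _ x = _\<close> by simp
  also have "\<dots> \<le> (\<Sum>v<Suc n. lambda_fam \<alpha> F n * (1 - (x v)\<^sup>2))"
  proof (rule sum_mono)
    fix v
    assume "v \<in> {..<Suc n}"
    then have "v < Suc n"
      by simp
    then have "sum_squares n (x \<circ> skip v) = 1 - (x v)\<^sup>2"
      using sum_squares_skip[of v "Suc n" x] unit by simp
    then show "quad_form n (A_alpha_entry \<alpha> (delete_vertex G v)) (x \<circ> skip v)
               \<le> lambda_fam \<alpha> F n * (1 - (x v)\<^sup>2)"
      using quad_form_le_lambda_fam[OF graphs deleted[OF \<open>v < Suc n\<close>] \<open>n \<ge> 1\<close>, of \<alpha> "x \<circ> skip v"]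
      by simp
  qed
  also have "\<dots> = lambda_fam \<alpha> F n * (real (Suc n) - sum_squares (Suc n) x)"
    unfolding sum_squares_def sum_distrib_left[symmetric]
    by (simp add: sum_subtractf del: sum.lessThan_Suc)
  also have "\<dots> = real n * lambda_fam \<alpha> F n"
    using unit by simp
  finally show ?thesis .
qed

lemma ratio_limit_if_decreasing:
  fixes f :: "nat \<Rightarrow> real"
  assumes step: "\<And>n. n \<ge> 1 \<Longrightarrow> (real n - 1) * f (Suc n) \<le> real n * f n"
    and nonneg: "\<And>n. n \<ge> N \<Longrightarrow> 0 \<le> f n"
  shows "\<exists>L. (\<lambda>n. f n / real n) \<longlonglongrightarrow> L \<and> (\<forall>n\<ge>2. L \<le> f n / (real n - 1))"
proof -
  define c where "c k = f (k + 2) / real (Suc k)" for k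
  have "decseq c"
  proof (rule decseq_SucI)
    fix k
    have "real (Suc k) * f (Suc (k + 2)) \<le> real (k + 2) * f (k + 2)"
      using step[of "k + 2"] by simp
    then show "c (Suc k) \<le> c k"
      unfolding c_def by (simp add: divide_simps mult.commute)
  qed
  moreover have "0 \<le> c k" for k
  proof -
    have "0 \<le> c (k + N)"
      unfolding c_def using nonneg[of "k + N + 2"] by simp
    also have "c (k + N) \<le> c k"
      using \<open>decseq c\<close> by (simp add: decseq_def)
    finally show ?thesis .
  qed
  ultimately obtain L where "c \<longlonglongrightarrow> L" and L_le: "\<forall>k. L \<le> c k"
    using decseq_convergent by metis
  have "(\<lambda>k. c k * (real (Suc k) / real (Suc (Suc k)))) \<longlonglongrightarrow> L * 1"
    by (intro tendsto_mult \<open>c \<longlonglongrightarrow> L\<close> LIMSEQ_Suc[OF LIMSEQ_n_over_Suc_n])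
  then have "(\<lambda>k. f (k + 2) / real (k + 2)) \<longlonglongrightarrow> L"
    unfolding c_def by (simp add: field_simps del: of_nat_Suc)
  then have "(\<lambda>n. f n / real n) \<longlonglongrightarrow> L"
    by (rule LIMSEQ_offset)
  moreover have "L \<le> f n / (real n - 1)" if n: "n \<ge> 2" for n
  proof -
    obtain k where "n = k + 2"
      using le_add_diff_inverse2[OF n] by metis
    then show ?thesis
      using L_le unfolding c_def by simp
  qed
  ultimately show ?thesis
    by blast
qed

theorem lemma3p4:
  fixes F :: "graph set" and r :: nat and \<alpha> :: real and n1 :: nat
  assumes "\<forall>G\<in>F. is_graph G"
    and "hereditary F"
    and "\<forall>n. slice F n \<noteq> {}"
    and "r \<ge> 2"
    and "0 \<le> \<alpha>" and "\<alpha> \<le> 1 - 1 / real r"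
    and "\<forall>n\<ge>n1. lambda_fam \<alpha> F n > (1 - 1 / real r) * real n - (1 - 1 / real r)"
  shows "\<exists>L. (\<lambda>n. lambda_fam \<alpha> F n / real n) \<longlonglongrightarrow> L
           \<and> (\<forall>n\<ge>n1. L \<le> lambda_fam \<alpha> F n / (real n - 1))"
proof -
  have "lambda_fam \<alpha> F 1 = 0"
    using lambda_fam_one assms(1,3) by blast
  then have "\<not> n1 \<le> 1"
    using assms(7) by force
  then have "n1 \<ge> 2"
    by simp
  have "0 \<le> lambda_fam \<alpha> F n" if "n \<ge> n1" for n
  proof -
    have "0 \<le> (1 - 1 / real r) * (real n - 1)"
      using \<open>r \<ge> 2\<close> \<open>n1 \<ge> 2\<close> that by simp
    also have "\<dots> = (1 - 1 / real r) * real n - (1 - 1 / real r)"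
      by (simp add: right_diff_distrib)
    also have "\<dots> < lambda_fam \<alpha> F n"
      using assms(7) that by blast
    finally show ?thesis
      by simp
  qed
  then obtain L where "(\<lambda>n. lambda_fam \<alpha> F n / real n) \<longlonglongrightarrow> L"
    and "\<forall>n\<ge>2. L \<le> lambda_fam \<alpha> F n / (real n - 1)"
    using ratio_limit_if_decreasing[of "lambda_fam \<alpha> F" n1]
      lambda_fam_Suc_le[OF assms(1,2) assms(3)[rule_format]] by blast
  then show ?thesis
    using \<open>n1 \<ge> 2\<close> by auto
qed

end
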